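(* Let $h$ be a signal rate for the model and weight matrix $W$ described in the context, and let $\rho = W^{1/2}\Delta W^{1/2}$. If $\|\rho\| = O(h(p))$ as $p\to\infty$, then the reduction $R(X) = (\Gamma^{T}\Delta^{-1}\Gamma)^{-1}\Gamma^{T}\Delta^{-1}(X-\mu)$ is stable, i.e. $\lim_{p\to\infty}\|\operatorname{var}(R(X))\| < \infty$.
   Context: Observations $(Y_i,X_i)$, $i=1,\dots,n$, are independent, $Y_i\in\mathbb{R}$, $X_i\in\mathbb{R}^p$; asymptotics are as $p\to\infty$ (predictors added), conditional on the responses. Model: $X_i = \mu + \Gamma\xi_i + \varepsilon_i$, with $\mu\in\mathbb{R}^p$, $\Gamma\in\mathbb{R}^{p\times d}$ ($d$ fixed), $\xi_i=\xi(Y_i)\in\mathbb{R}^d$ for an unknown function $\xi$, and $\varepsilon_i$ independent copies of a random vector $\varepsilon$ (independent of the responses) with mean $0$ and variance $\Delta>0$. $W\in\mathbb{R}^{p\times p}$ is a symmetric positive semidefinite population weight matrix, and $\Gamma$ is normalized so that $\Gamma^TW\Gamma$ is diagonal. A signal rate is a positive monotonically increasing function $h(p)=O(p)$ such that $G_h=\Gamma^TW\Gamma/h(p)$ converges as $p\to\infty$ to a diagonal positive definite matrix $G$ with finite entries. $\|\cdot\|$ is the spectral norm. *)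

theory Defs
  imports "HOL-Probability.Probability" "HOL-Library.Landau_Symbols"
    "Jordan_Normal_Form.Matrix"
begin

definition vnorm :: "real vec \<Rightarrow> real" where
  "vnorm v = sqrt (v \<bullet> v)"

definition spec_norm :: "real mat \<Rightarrow> real" where
  "spec_norm A = Sup {vnorm (A *\<^sub>v v) | v. v \<in> carrier_vec (dim_col A) \<and> vnorm v = 1}"

definition sym_mat :: "real mat \<Rightarrow> bool" where
  "sym_mat A \<longleftrightarrow> A \<in> carrier_mat (dim_row A) (dim_row A) \<and> A\<^sup>T = A"

definition psd_mat :: "real mat \<Rightarrow> bool" where
  "psd_mat A \<longleftrightarrow> sym_mat A \<and> (\<forall>v \<in> carrier_vec (dim_row A). v \<bullet> (A *\<^sub>v v) \<ge> 0)"

definition pd_mat :: "real mat \<Rightarrow> bool" where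
  "pd_mat A \<longleftrightarrow> sym_mat A \<and>
     (\<forall>v \<in> carrier_vec (dim_row A). v \<noteq> 0\<^sub>v (dim_row A) \<longrightarrow> v \<bullet> (A *\<^sub>v v) > 0)"

definition mat_inv :: "real mat \<Rightarrow> real mat" where
  "mat_inv A = (SOME B. B \<in> carrier_mat (dim_row A) (dim_row A) \<and>
                        A * B = 1\<^sub>m (dim_row A) \<and> B * A = 1\<^sub>m (dim_row A))"

definition mat_sqrt :: "real mat \<Rightarrow> real mat" where
  "mat_sqrt A = (THE S. psd_mat S \<and> dim_row S = dim_row A \<and> S * S = A)"

abbreviation E :: "'a measure \<Rightarrow> ('a \<Rightarrow> real) \<Rightarrow> real" where
  "E M f \<equiv> integral\<^sup>L M f"

definition cov_mat :: "'a measure \<Rightarrow> ('a \<Rightarrow> real vec) \<Rightarrow> nat \<Rightarrow> real mat" where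
  "cov_mat M Z k = mat k k (\<lambda>(i,j).
      E M (\<lambda>w. (Z w $ i - E M (\<lambda>u. Z u $ i)) * (Z w $ j - E M (\<lambda>u. Z u $ j))))"

definition reduction :: "real mat \<Rightarrow> real mat \<Rightarrow> real vec \<Rightarrow> real vec \<Rightarrow> real vec" where
  "reduction \<Gamma> \<Delta> \<mu> x =
     (mat_inv (\<Gamma>\<^sup>T * mat_inv \<Delta> * \<Gamma>) * \<Gamma>\<^sup>T * mat_inv \<Delta>) *\<^sub>v (x - \<mu>)"

end

theory Submission
  imports Defs "Jordan_Normal_Form.Schur_Decomposition"
begin

text \<open>The reduction is \<open>R(X) = A (X - \<mu>)\<close> with \<open>A = K\<^sup>-\<^sup>1 \<Gamma>\<^sup>T \<Delta>\<^sup>-\<^sup>1\<close> and \<open>K = \<Gamma>\<^sup>T \<Delta>\<^sup>-\<^sup>1 \<Gamma>\<close>.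
  It is an affine function of the noise, so \<open>var R(X) = A \<Delta> A\<^sup>T = K\<^sup>-\<^sup>1\<close>, and it suffices to bound
  the quadratic form of \<open>K\<close> from below. Cauchy-Schwarz for the inner product given by \<open>\<Delta>\<close>
  yields \<open>u\<^sup>T W u \<le> \<parallel>\<rho>\<parallel> u\<^sup>T \<Delta>\<^sup>-\<^sup>1 u\<close> for \<open>\<rho> = W\<^sup>1\<^sup>/\<^sup>2 \<Delta> W\<^sup>1\<^sup>/\<^sup>2\<close>, hence
  \<open>a\<^sup>T K a \<ge> a\<^sup>T \<Gamma>\<^sup>T W \<Gamma> a / \<parallel>\<rho>\<parallel>\<close>. Eventually the diagonal matrix \<open>\<Gamma>\<^sup>T W \<Gamma> / h(p)\<close> has entries
  at least some \<open>g > 0\<close> and \<open>\<parallel>\<rho>\<parallel> \<le> C h(p)\<close>, so \<open>K \<ge> (g / C) I\<close> and \<open>\<parallel>var R(X)\<parallel> \<le> C / g\<close>.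
  The square root \<open>W\<^sup>1\<^sup>/\<^sup>2\<close> is the unique psd square root, whose existence rests on the spectral
  theorem for real symmetric matrices.\<close>

lemma scalar_prod_self_nonneg: "(v :: real vec) \<bullet> v \<ge> 0"
  using conjugate_square_ge_0_vec[of v] by simp

lemma scalar_prod_self_eq_0_iff: "(v :: real vec) \<in> carrier_vec n \<Longrightarrow> v \<bullet> v = 0 \<longleftrightarrow> v = 0\<^sub>v n"
  using conjugate_square_eq_0_vec[of v n] by simp

lemma sym_mat_scalar_prod_swap:
  fixes A :: "real mat"
  assumes "A \<in> carrier_mat n n" "A\<^sup>T = A" "x \<in> carrier_vec n" "y \<in> carrier_vec n"
  shows "x \<bullet> (A *\<^sub>v y) = (A *\<^sub>v x) \<bullet> y"
  using transpose_vec_mult_scalar[OF assms(1,4,3)] assms(2) by simp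

lemma vnorm_smult: "vnorm (c \<cdot>\<^sub>v v) = \<bar>c\<bar> * vnorm v"
proof -
  have "(c \<cdot>\<^sub>v v) \<bullet> (c \<cdot>\<^sub>v v) = c\<^sup>2 * (v \<bullet> v)"
    by (simp add: power2_eq_square mult.assoc)
  then show ?thesis unfolding vnorm_def by (simp add: real_sqrt_mult)
qed

lemma vnorm_nonneg: "vnorm v \<ge> 0"
  unfolding vnorm_def using scalar_prod_self_nonneg[of v] by simp

lemma vnorm_square: "(vnorm v)\<^sup>2 = v \<bullet> v"
  unfolding vnorm_def using scalar_prod_self_nonneg[of v] by simp

section \<open>Spectral theorem for real symmetric matrices\<close>

definition orthonormal_mat :: "nat \<Rightarrow> real mat \<Rightarrow> bool" where
  "orthonormal_mat n Q \<longleftrightarrow> Q \<in> carrier_mat n n \<and> Q\<^sup>T * Q = 1\<^sub>m n \<and> Q * Q\<^sup>T = 1\<^sub>m n"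

lemma real_sym_mat_complex_eigenvalue_real:
  fixes A :: "real mat" and v :: "complex vec"
  assumes A: "A \<in> carrier_mat n n" and sym: "A\<^sup>T = A"
    and v: "v \<in> carrier_vec n" "v \<noteq> 0\<^sub>v n" and Av: "map_mat of_real A *\<^sub>v v = z \<cdot>\<^sub>v v"
  shows "z \<in> \<real>"
proof -
  have row_eq: "(\<Sum>j<n. of_real (A $$ (i, j)) * v $ j) = z * v $ i" if "i < n" for i
  proof -
    have "(map_mat of_real A *\<^sub>v v) $ i = (z \<cdot>\<^sub>v v) $ i" using Av by simp
    then show ?thesis using that A v(1) by (simp add: scalar_prod_def lessThan_atLeast0 row_def)
  qed
  define s where "s = (\<Sum>i<n. \<Sum>j<n. cnj (v $ i) * of_real (A $$ (i, j)) * v $ j)"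
  define N where "N = (\<Sum>i<n. (cmod (v $ i))\<^sup>2)"
  \<comment> \<open>The Hermitian form \<open>s = v\<^sup>* A v\<close> is real because \<open>A\<close> is real symmetric, and it equals \<open>z |v|\<^sup>2\<close>.\<close>
  have s_eq: "s = z * of_real N"
  proof -
    have "s = (\<Sum>i<n. cnj (v $ i) * (\<Sum>j<n. of_real (A $$ (i, j)) * v $ j))"
      unfolding s_def by (simp add: sum_distrib_left mult.assoc)
    also have "\<dots> = (\<Sum>i<n. z * (cnj (v $ i) * v $ i))"
      using row_eq by (simp add: algebra_simps)
    also have "\<dots> = z * of_real N"
      unfolding N_def of_real_sum sum_distrib_left
      by (intro sum.cong refl) (simp add: complex_norm_square mult.commute del: of_real_power)
    finally show ?thesis .
  qed
  have "cnj s = s"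
  proof -
    have "cnj s = (\<Sum>i<n. \<Sum>j<n. v $ i * of_real (A $$ (i, j)) * cnj (v $ j))"
      unfolding s_def by (simp add: cnj_sum)
    also have "\<dots> = (\<Sum>j<n. \<Sum>i<n. v $ i * of_real (A $$ (i, j)) * cnj (v $ j))"
      by (rule sum.swap)
    also have "\<dots> = s"
      unfolding s_def
    proof (intro sum.cong refl)
      fix i j assume "i \<in> {..<n}" "j \<in> {..<n}"
      then have "A $$ (j, i) = A $$ (i, j)"
        using arg_cong[OF sym, of "\<lambda>B. B $$ (i, j)"] A by simp
      then show "v $ j * of_real (A $$ (j, i)) * cnj (v $ i) = cnj (v $ i) * of_real (A $$ (i, j)) * v $ j"
        by (simp add: mult.commute mult.left_commute)
    qed
    finally show ?thesis .
  qed
  moreover obtain k where k: "k < n" "v $ k \<noteq> 0"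
    using v by (metis eq_vecI index_zero_vec(1,2) carrier_vecD)
  then have "N > 0"
    unfolding N_def by (intro sum_pos2[of _ k]) auto
  ultimately show ?thesis
    using s_eq by (simp add: Reals_cnj_iff)
qed

lemma real_sym_mat_eigenvector:
  fixes A :: "real mat"
  assumes A: "A \<in> carrier_mat n n" and n: "n > 0" and sym: "A\<^sup>T = A"
  obtains e v where "v \<in> carrier_vec n" "v \<noteq> 0\<^sub>v n" "A *\<^sub>v v = e \<cdot>\<^sub>v v"
proof -
  let ?Ac = "map_mat (of_real :: real \<Rightarrow> complex) A"
  have Ac: "?Ac \<in> carrier_mat n n" using A by simp
  obtain as where as: "char_poly ?Ac = (\<Prod>a\<leftarrow>as. [:- a, 1:])" "length as = n"
    using char_poly_factorized[OF Ac] by blast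
  then obtain z zs where "as = z # zs" using n by (cases as) auto
  then have "poly (char_poly ?Ac) z = 0" using as(1) by simp
  then obtain w where "w \<in> carrier_vec n" "w \<noteq> 0\<^sub>v n" "?Ac *\<^sub>v w = z \<cdot>\<^sub>v w"
    using eigenvalue_root_char_poly[OF Ac] Ac unfolding eigenvalue_def eigenvector_def by auto
  then have "z \<in> \<real>" by (rule real_sym_mat_complex_eigenvalue_real[OF A sym])
  then have z: "z = of_real (Re z)" by (simp add: complex_is_Real_iff complex_eq_iff)
  have "of_real (poly (char_poly A) (Re z)) = poly (char_poly ?Ac) (of_real (Re z))"
    unfolding of_real_hom.char_poly_hom[OF A] by (rule of_real_hom.poly_map_poly[symmetric])
  with \<open>poly (char_poly ?Ac) z = 0\<close> z have "eigenvalue A (Re z)"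
    using eigenvalue_root_char_poly[OF A] by simp
  then show ?thesis using that A unfolding eigenvalue_def eigenvector_def by auto
qed

lemma orthonormal_mat_of_corthogonal:
  assumes ws: "set ws \<subseteq> carrier_vec n" "corthogonal ws" "length ws = n"
  defines "Q \<equiv> mat_of_cols n (map (\<lambda>w. (1 / vnorm w) \<cdot>\<^sub>v w) ws)"
  shows "orthonormal_mat n Q" and "\<And>i. i < n \<Longrightarrow> col Q i = (1 / vnorm (ws ! i)) \<cdot>\<^sub>v ws ! i"
proof -
  have ws_i: "ws ! i \<in> carrier_vec n" if "i < n" for i using ws that by auto
  show col: "col Q i = (1 / vnorm (ws ! i)) \<cdot>\<^sub>v ws ! i" if "i < n" for i
    unfolding Q_def using that ws ws_i[OF that] by simp
  have orth: "ws ! i \<bullet> ws ! j = 0 \<longleftrightarrow> i \<noteq> j" if "i < n" "j < n" for i j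
    using corthogonalD[OF ws(2), of i j] that ws(3) by simp
  have norm_pos: "vnorm (ws ! i) > 0" if "i < n" for i
    using orth[OF that that] scalar_prod_self_nonneg[of "ws ! i"] unfolding vnorm_def by simp
  have "col Q i \<bullet> col Q j = (if i = j then 1 else 0)" if ij: "i < n" "j < n" for i j
  proof -
    have "col Q i \<bullet> col Q j = ws ! i \<bullet> ws ! j / (vnorm (ws ! i) * vnorm (ws ! j))"
      unfolding col[OF ij(1)] col[OF ij(2)] using ws_i[OF ij(1)] ws_i[OF ij(2)] by simp
    moreover have "ws ! i \<bullet> ws ! i / (vnorm (ws ! i) * vnorm (ws ! i)) = 1"
      using norm_pos[OF ij(1)] unfolding vnorm_square[symmetric] power2_eq_square by simp
    ultimately show ?thesis using orth[OF ij] by (cases "i = j") simp_all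
  qed
  moreover have Q: "Q \<in> carrier_mat n n" unfolding Q_def using mat_of_cols_carrier(1)[of n "map (\<lambda>w. (1 / vnorm w) \<cdot>\<^sub>v w) ws"] ws(3) by simp
  ultimately have QtQ: "Q\<^sup>T * Q = 1\<^sub>m n" by (intro eq_matI) simp_all
  then show "orthonormal_mat n Q"
    using mat_mult_left_right_inverse[OF _ Q QtQ] Q unfolding orthonormal_mat_def by simp
qed

lemma orthonormal_mat_first_col:
  fixes v :: "real vec"
  assumes v: "v \<in> carrier_vec n" and v0: "v \<noteq> 0\<^sub>v n"
  obtains W c where "orthonormal_mat n W" "col W 0 = c \<cdot>\<^sub>v v"
proof -
  interpret cof_vec_space n "TYPE(real)" .
  define b where "b = basis_completion v"
  from basis_completion[OF v v0, folded b_def]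
  have b: "distinct b" "\<not> lin_dep (set b)" "set b \<subseteq> carrier_vec n" "hd b = v" "length b = n"
    by auto
  have "n > 0"
  proof (rule ccontr)
    assume "\<not> n > 0"
    then have "v = 0\<^sub>v n" using v by (intro eq_vecI) auto
    with v0 show False by simp
  qed
  then obtain vs where bv: "b = v # vs" using b(4,5) by (cases b) auto
  define ws where "ws = gram_schmidt n b"
  from gram_schmidt_result[OF b(3,1,2) refl, folded ws_def]
  have ws: "set ws \<subseteq> carrier_vec n" "corthogonal ws" "length ws = n" by (auto simp: b(5))
  have "hd ws = v" unfolding ws_def bv using v by simp
  then have "ws ! 0 = v" using hd_conv_nth[of ws] ws(3) \<open>n > 0\<close> by auto
  with orthonormal_mat_of_corthogonal[OF ws] \<open>n > 0\<close> show ?thesis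
    by (intro that) auto
qed
lemma orthonormal_mat_mult:
  assumes P: "orthonormal_mat n P" and Q: "orthonormal_mat n Q"
  shows "orthonormal_mat n (P * Q)"
proof -
  have Pc: "P \<in> carrier_mat n n" and Qc: "Q \<in> carrier_mat n n"
    using P Q unfolding orthonormal_mat_def by auto
  have "(P * Q)\<^sup>T * (P * Q) = Q\<^sup>T * (P\<^sup>T * P) * Q"
    using Pc Qc by (simp add: transpose_mult assoc_mult_mat[of _ n n _ n _ n])
  moreover have "(P * Q) * (P * Q)\<^sup>T = P * (Q * Q\<^sup>T) * P\<^sup>T"
    using Pc Qc by (simp add: transpose_mult assoc_mult_mat[of _ n n _ n _ n])
  ultimately show ?thesis using P Q Pc Qc unfolding orthonormal_mat_def by simp
qed

lemma orthonormal_mat_conj_cancel: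
  assumes W: "orthonormal_mat n W" and A: "A \<in> carrier_mat n n"
  shows "W * (W\<^sup>T * A * W) * W\<^sup>T = A"
proof -
  have Wc: "W \<in> carrier_mat n n" and WWt: "W * W\<^sup>T = 1\<^sub>m n"
    using W unfolding orthonormal_mat_def by auto
  have "W * (W\<^sup>T * A * W) * W\<^sup>T = (W * W\<^sup>T) * A * (W * W\<^sup>T)"
    using Wc A by (simp add: assoc_mult_mat[of _ n n _ n _ n])
  then show ?thesis using WWt A by simp
qed

lemma sym_mat_conj:
  fixes A W :: "real mat"
  assumes A: "A \<in> carrier_mat n n" and sym: "A\<^sup>T = A" and W: "W \<in> carrier_mat n k"
  shows "(W\<^sup>T * A * W)\<^sup>T = W\<^sup>T * A * W"
proof -
  have "(W\<^sup>T * A * W)\<^sup>T = W\<^sup>T * (W\<^sup>T * A)\<^sup>T"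
    using A W transpose_mult[of "W\<^sup>T * A" k n W k] by simp
  also have "(W\<^sup>T * A)\<^sup>T = A * W" using A W transpose_mult[of "W\<^sup>T" k n A n] sym by simp
  finally show ?thesis using A W by (simp add: assoc_mult_mat[of _ k n _ n _ k])
qed

lemma orthonormal_conj_eigenvector_col:
  fixes A :: "real mat"
  assumes W: "orthonormal_mat n W" and A: "A \<in> carrier_mat n n" and n: "0 < n" and i: "i < n"
    and eig: "A *\<^sub>v col W 0 = e \<cdot>\<^sub>v col W 0"
  shows "(W\<^sup>T * A * W) $$ (i, 0) = (if i = 0 then e else 0)"
proof -
  have Wc: "W \<in> carrier_mat n n" and WtW: "W\<^sup>T * W = 1\<^sub>m n"
    using W unfolding orthonormal_mat_def by auto
  have "(W\<^sup>T * A * W) $$ (i, 0) = col W i \<bullet> (A *\<^sub>v col W 0)"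
    using Wc A i n by (simp add: assoc_mult_mat[of _ n n _ n _ n])
  also have "\<dots> = e * (W\<^sup>T * W) $$ (i, 0)"
    unfolding eig using Wc i n by simp
  finally show ?thesis unfolding WtW using i n by simp
qed

lemma sym_mat_split_first_col:
  fixes B :: "real mat"
  assumes B: "B \<in> carrier_mat (Suc m) (Suc m)" and sym: "B\<^sup>T = B"
    and col0: "\<And>i. i < Suc m \<Longrightarrow> B $$ (i, 0) = (if i = 0 then e else 0)"
  shows "B = four_block_mat (mat 1 1 (\<lambda>_. e)) (0\<^sub>m 1 m) (0\<^sub>m m 1)
                (mat m m (\<lambda>(i, j). B $$ (Suc i, Suc j)))"
proof -
  have row0: "B $$ (0, j) = (if j = 0 then e else 0)" if "j < Suc m" for j
    using col0[OF that] arg_cong[OF sym, of "\<lambda>C. C $$ (0, j)"] that B by simp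
  show ?thesis
  proof (rule eq_matI)
    fix i j assume "i < dim_row (four_block_mat (mat 1 1 (\<lambda>_. e)) (0\<^sub>m 1 m) (0\<^sub>m m 1)
                (mat m m (\<lambda>(i, j). B $$ (Suc i, Suc j))))"
      "j < dim_col (four_block_mat (mat 1 1 (\<lambda>_. e)) (0\<^sub>m 1 m) (0\<^sub>m m 1)
                (mat m m (\<lambda>(i, j). B $$ (Suc i, Suc j))))"
    then have "i < Suc m" "j < Suc m" by auto
    then show "B $$ (i, j) = four_block_mat (mat 1 1 (\<lambda>_. e)) (0\<^sub>m 1 m) (0\<^sub>m m 1)
                (mat m m (\<lambda>(i, j). B $$ (Suc i, Suc j))) $$ (i, j)"
      using col0 row0 by (cases i; cases j) auto
  qed (use B in auto)
qed

lemma four_block_mat_diag: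
  "four_block_mat (mat 1 1 (\<lambda>_. e)) (0\<^sub>m 1 m) (0\<^sub>m m 1) (mat_diag m f)
     = mat_diag (Suc m) (\<lambda>i. if i = 0 then e else f (i - 1))"
  by (rule eq_matI) (auto simp: mat_diag_def)

lemma orthonormal_mat_four_block:
  assumes Q: "orthonormal_mat m Q"
  shows "orthonormal_mat (Suc m) (four_block_mat (1\<^sub>m 1) (0\<^sub>m 1 m) (0\<^sub>m m 1) Q)"
proof -
  have Qc: "Q \<in> carrier_mat m m" and QtQ: "Q\<^sup>T * Q = 1\<^sub>m m" and QQt: "Q * Q\<^sup>T = 1\<^sub>m m"
    using Q unfolding orthonormal_mat_def by auto
  have Qt: "Q\<^sup>T \<in> carrier_mat m m" using Qc by simp
  have T: "(four_block_mat (1\<^sub>m 1) (0\<^sub>m 1 m) (0\<^sub>m m 1) Q)\<^sup>T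
      = four_block_mat (1\<^sub>m 1) (0\<^sub>m 1 m) (0\<^sub>m m 1) Q\<^sup>T"
    using transpose_four_block_mat[OF one_carrier_mat zero_carrier_mat zero_carrier_mat Qc] by simp
  have "four_block_mat (1\<^sub>m 1) (0\<^sub>m 1 m) (0\<^sub>m m 1) Q\<^sup>T * four_block_mat (1\<^sub>m 1) (0\<^sub>m 1 m) (0\<^sub>m m 1) Q
      = 1\<^sub>m (Suc m)"
    by (subst mult_four_block_mat[OF one_carrier_mat zero_carrier_mat zero_carrier_mat Qt
          one_carrier_mat zero_carrier_mat zero_carrier_mat Qc]) (use Qc QtQ in auto)
  moreover have "four_block_mat (1\<^sub>m 1) (0\<^sub>m 1 m) (0\<^sub>m m 1) Q * four_block_mat (1\<^sub>m 1) (0\<^sub>m 1 m) (0\<^sub>m m 1) Q\<^sup>T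
      = 1\<^sub>m (Suc m)"
    by (subst mult_four_block_mat[OF one_carrier_mat zero_carrier_mat zero_carrier_mat Qc
          one_carrier_mat zero_carrier_mat zero_carrier_mat Qt]) (use Qt QQt in auto)
  moreover have "four_block_mat (1\<^sub>m 1) (0\<^sub>m 1 m) (0\<^sub>m m 1) Q \<in> carrier_mat (Suc m) (Suc m)"
    using four_block_carrier_mat[of "1\<^sub>m 1" 1 1 Q m m] Qc by simp
  ultimately show ?thesis unfolding orthonormal_mat_def T by blast
qed

lemma four_block_mat_conj:
  fixes Q D E :: "real mat"
  assumes Q: "Q \<in> carrier_mat m m" and D: "D \<in> carrier_mat m m" and E: "E \<in> carrier_mat 1 1"
  shows "four_block_mat (1\<^sub>m 1) (0\<^sub>m 1 m) (0\<^sub>m m 1) Q * four_block_mat E (0\<^sub>m 1 m) (0\<^sub>m m 1) D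
       * (four_block_mat (1\<^sub>m 1) (0\<^sub>m 1 m) (0\<^sub>m m 1) Q)\<^sup>T
     = four_block_mat E (0\<^sub>m 1 m) (0\<^sub>m m 1) (Q * D * Q\<^sup>T)"
proof -
  have Qt: "Q\<^sup>T \<in> carrier_mat m m" and QD: "Q * D \<in> carrier_mat m m" using Q D by auto
  have "four_block_mat (1\<^sub>m 1) (0\<^sub>m 1 m) (0\<^sub>m m 1) Q * four_block_mat E (0\<^sub>m 1 m) (0\<^sub>m m 1) D
      = four_block_mat E (0\<^sub>m 1 m) (0\<^sub>m m 1) (Q * D)"
    by (subst mult_four_block_mat[OF one_carrier_mat zero_carrier_mat
          zero_carrier_mat Q E zero_carrier_mat zero_carrier_mat D]) (use Q D E in auto)
  moreover have "(four_block_mat (1\<^sub>m 1) (0\<^sub>m 1 m) (0\<^sub>m m 1) Q)\<^sup>T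
      = four_block_mat (1\<^sub>m 1) (0\<^sub>m 1 m) (0\<^sub>m m 1) Q\<^sup>T"
    using transpose_four_block_mat[OF one_carrier_mat zero_carrier_mat zero_carrier_mat Q] by simp
  ultimately show ?thesis
    by (simp only:, subst mult_four_block_mat[OF E zero_carrier_mat zero_carrier_mat QD
          one_carrier_mat zero_carrier_mat zero_carrier_mat Qt]) (use Q D E in auto)
qed

lemma mult_conj_assoc:
  fixes P Q D :: "'a :: comm_ring mat"
  assumes P: "P \<in> carrier_mat n m" and Q: "Q \<in> carrier_mat m k" and D: "D \<in> carrier_mat k k"
  shows "(P * Q) * D * (P * Q)\<^sup>T = P * (Q * D * Q\<^sup>T) * P\<^sup>T"
proof -
  have Pt: "P\<^sup>T \<in> carrier_mat m n" and Qt: "Q\<^sup>T \<in> carrier_mat k m"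
    and QD: "Q * D \<in> carrier_mat m k" and QDQt: "Q * D * Q\<^sup>T \<in> carrier_mat m m"
    using P Q D by auto
  have "(P * Q) * D * (P * Q)\<^sup>T = P * (Q * D) * (Q\<^sup>T * P\<^sup>T)"
    using assoc_mult_mat[OF P Q D] transpose_mult[OF P Q] by simp
  also have "\<dots> = P * ((Q * D) * (Q\<^sup>T * P\<^sup>T))"
    using assoc_mult_mat[OF P QD mult_carrier_mat[OF Qt Pt]] .
  also have "(Q * D) * (Q\<^sup>T * P\<^sup>T) = (Q * D * Q\<^sup>T) * P\<^sup>T"
    using assoc_mult_mat[OF QD Qt Pt] by simp
  also have "P * \<dots> = P * (Q * D * Q\<^sup>T) * P\<^sup>T"
    using assoc_mult_mat[OF P QDQt Pt] by simp
  finally show ?thesis .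
qed

theorem real_sym_mat_spectral:
  fixes A :: "real mat"
  assumes "A \<in> carrier_mat n n" "A\<^sup>T = A"
  shows "\<exists>Q f. orthonormal_mat n Q \<and> A = Q * mat_diag n f * Q\<^sup>T"
  using assms
proof (induction n arbitrary: A)
  case 0
  then have "A = 1\<^sub>m 0 * mat_diag 0 (\<lambda>_. 0) * (1\<^sub>m 0)\<^sup>T" by (intro eq_matI) auto
  moreover have "orthonormal_mat 0 (1\<^sub>m 0)" unfolding orthonormal_mat_def by simp
  ultimately show ?case by blast
next
  case (Suc m A)
  note A = Suc.prems(1) and sym = Suc.prems(2)
  obtain e v where v: "v \<in> carrier_vec (Suc m)" "v \<noteq> 0\<^sub>v (Suc m)" and eig: "A *\<^sub>v v = e \<cdot>\<^sub>v v"
    using real_sym_mat_eigenvector[OF A zero_less_Suc sym] by blast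
  obtain W c where W: "orthonormal_mat (Suc m) W" and W0: "col W 0 = c \<cdot>\<^sub>v v"
    using orthonormal_mat_first_col[OF v] by auto
  have Wc: "W \<in> carrier_mat (Suc m) (Suc m)" using W unfolding orthonormal_mat_def by simp
  have eig_W: "A *\<^sub>v col W 0 = e \<cdot>\<^sub>v col W 0"
    unfolding W0 using A v(1) eig by (simp add: mult_mat_vec smult_smult_assoc mult.commute)
  define B where "B = W\<^sup>T * A * W"
  define B3 where "B3 = mat m m (\<lambda>(i, j). B $$ (Suc i, Suc j))"
  have Bc: "B \<in> carrier_mat (Suc m) (Suc m)" unfolding B_def using A Wc by simp
  have B_sym: "B\<^sup>T = B" unfolding B_def by (rule sym_mat_conj[OF A sym Wc])
  have B_split: "B = four_block_mat (mat 1 1 (\<lambda>_. e)) (0\<^sub>m 1 m) (0\<^sub>m m 1) B3"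
    unfolding B3_def using orthonormal_conj_eigenvector_col[OF W A _ _ eig_W]
    by (intro sym_mat_split_first_col[OF Bc B_sym]) (simp add: B_def)
  have "B3\<^sup>T = B3"
  proof (rule eq_matI)
    fix i j assume "i < dim_row B3" "j < dim_col B3"
    then show "B3\<^sup>T $$ (i, j) = B3 $$ (i, j)"
      using arg_cong[OF B_sym, of "\<lambda>C. C $$ (Suc i, Suc j)"] Bc unfolding B3_def by simp
  qed (simp_all add: B3_def)
  then obtain Q3 f3 where Q3: "orthonormal_mat m Q3" and B3: "B3 = Q3 * mat_diag m f3 * Q3\<^sup>T"
    using Suc.IH[of B3] unfolding B3_def by auto
  define Q' where "Q' = four_block_mat (1\<^sub>m 1) (0\<^sub>m 1 m) (0\<^sub>m m 1) Q3"
  define f where "f = (\<lambda>i. if i = 0 then e else f3 (i - 1))"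
  have Q': "orthonormal_mat (Suc m) Q'"
    unfolding Q'_def by (rule orthonormal_mat_four_block[OF Q3])
  have Q'c: "Q' \<in> carrier_mat (Suc m) (Suc m)" using Q' unfolding orthonormal_mat_def by simp
  have "Q' * mat_diag (Suc m) f * Q'\<^sup>T
      = four_block_mat (mat 1 1 (\<lambda>_. e)) (0\<^sub>m 1 m) (0\<^sub>m m 1) (Q3 * mat_diag m f3 * Q3\<^sup>T)"
    unfolding Q'_def f_def four_block_mat_diag[symmetric]
    by (rule four_block_mat_conj) (use Q3 in \<open>auto simp: orthonormal_mat_def\<close>)
  then have "B = Q' * mat_diag (Suc m) f * Q'\<^sup>T" unfolding B_split B3 by simp
  then have "A = W * (Q' * mat_diag (Suc m) f * Q'\<^sup>T) * W\<^sup>T"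
    using orthonormal_mat_conj_cancel[OF W A] unfolding B_def by simp
  also have "\<dots> = (W * Q') * mat_diag (Suc m) f * (W * Q')\<^sup>T"
    by (rule mult_conj_assoc[OF Wc Q'c mat_diag_dim, symmetric])
  finally show ?case using orthonormal_mat_mult[OF W Q'] by blast
qed

section \<open>Square roots of positive semidefinite matrices\<close>

lemma col_mult_mat_diag:
  fixes Q :: "real mat"
  assumes "Q \<in> carrier_mat k n" "i < n"
  shows "col (Q * mat_diag n f) i = f i \<cdot>\<^sub>v col Q i"
  unfolding mat_diag_mult_right[OF assms(1)] using assms by (intro eq_vecI) (auto simp: mult.commute)

lemma quad_form_diagonal_mat:
  fixes B :: "real mat"
  assumes B: "B \<in> carrier_mat n n" and diag: "diagonal_mat B" and a: "a \<in> carrier_vec n"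
  shows "a \<bullet> (B *\<^sub>v a) = (\<Sum>i<n. B $$ (i, i) * (a $ i)\<^sup>2)"
proof -
  have "B *\<^sub>v a = vec n (\<lambda>i. B $$ (i, i) * a $ i)"
  proof (rule eq_vecI)
    fix i assume "i < dim_vec (vec n (\<lambda>i. B $$ (i, i) * a $ i))"
    then have i: "i < n" by simp
    have "(B *\<^sub>v a) $ i = (\<Sum>k\<in>{0..<n}. B $$ (i, k) * a $ k)"
      using B a i by (simp add: scalar_prod_def)
    also have "\<dots> = (\<Sum>k\<in>{0..<n}. if k = i then B $$ (i, i) * a $ i else 0)"
      by (intro sum.cong refl) (use diag B i in \<open>auto simp: diagonal_mat_def\<close>)
    finally show "(B *\<^sub>v a) $ i = vec n (\<lambda>i. B $$ (i, i) * a $ i) $ i" using i by simp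
  qed (use B in simp)
  then show ?thesis
    using a by (simp add: scalar_prod_def lessThan_atLeast0 power2_eq_square algebra_simps)
qed

lemma quad_form_conj:
  fixes G M :: "real mat"
  assumes G: "G \<in> carrier_mat p d" and M: "M \<in> carrier_mat p p" and a: "a \<in> carrier_vec d"
  shows "a \<bullet> ((G\<^sup>T * M * G) *\<^sub>v a) = (G *\<^sub>v a) \<bullet> (M *\<^sub>v (G *\<^sub>v a))"
proof -
  have "(G\<^sup>T * M * G) *\<^sub>v a = (G\<^sup>T * M) *\<^sub>v (G *\<^sub>v a)"
    by (rule assoc_mult_mat_vec) (use G M a in auto)
  also have "\<dots> = G\<^sup>T *\<^sub>v (M *\<^sub>v (G *\<^sub>v a))"
    by (rule assoc_mult_mat_vec) (use G M a in auto)
  finally have "(G\<^sup>T * M * G) *\<^sub>v a = G\<^sup>T *\<^sub>v (M *\<^sub>v (G *\<^sub>v a))" .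
  then show ?thesis
    using transpose_vec_mult_scalar[OF G a, of "M *\<^sub>v (G *\<^sub>v a)"] G M a
      comm_scalar_prod[of a d] comm_scalar_prod[of "G *\<^sub>v a" p] by simp
qed

lemma orthonormal_mat_col_norm:
  assumes Q: "orthonormal_mat n Q" and i: "i < n"
  shows "col Q i \<bullet> col Q i = 1"
proof -
  have Qc: "Q \<in> carrier_mat n n" and QtQ: "Q\<^sup>T * Q = 1\<^sub>m n"
    using Q unfolding orthonormal_mat_def by auto
  have "col Q i \<bullet> col Q i = (Q\<^sup>T * Q) $$ (i, i)" using Qc i by simp
  then show ?thesis unfolding QtQ using i by simp
qed

lemma orthonormal_diag_conj_eigenvector:
  assumes Q: "orthonormal_mat n Q" and i: "i < n"
  shows "(Q * mat_diag n f * Q\<^sup>T) *\<^sub>v col Q i = f i \<cdot>\<^sub>v col Q i"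
proof -
  have Qc: "Q \<in> carrier_mat n n" and QtQ: "Q\<^sup>T * Q = 1\<^sub>m n"
    using Q unfolding orthonormal_mat_def by auto
  have "(Q * mat_diag n f * Q\<^sup>T) * Q = Q * mat_diag n f * (Q\<^sup>T * Q)"
    using Qc by (simp add: assoc_mult_mat[of _ n n _ n _ n] mult_carrier_mat[of _ n n])
  then have "(Q * mat_diag n f * Q\<^sup>T) * Q = Q * mat_diag n f"
    using QtQ Qc by (simp add: mult_carrier_mat[of _ n n] right_mult_one_mat[of _ n n])
  then have "(Q * mat_diag n f * Q\<^sup>T) *\<^sub>v col Q i = col (Q * mat_diag n f) i"
    using col_mult2[of "Q * mat_diag n f * Q\<^sup>T" n n Q n i] Qc i
    by (simp add: mult_carrier_mat[of _ n n])
  then show ?thesis using col_mult_mat_diag[OF Qc i] by simp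
qed

lemma orthonormal_diag_conj_mult:
  assumes Q: "orthonormal_mat n Q"
  shows "(Q * mat_diag n f * Q\<^sup>T) * (Q * mat_diag n g * Q\<^sup>T) = Q * mat_diag n (\<lambda>i. f i * g i) * Q\<^sup>T"
proof -
  have Qc: "Q \<in> carrier_mat n n" and QtQ: "Q\<^sup>T * Q = 1\<^sub>m n"
    using Q unfolding orthonormal_mat_def by auto
  have "(Q * mat_diag n f * Q\<^sup>T) * (Q * mat_diag n g * Q\<^sup>T)
      = Q * mat_diag n f * (Q\<^sup>T * Q) * mat_diag n g * Q\<^sup>T"
    using Qc by (simp add: assoc_mult_mat[of _ n n _ n _ n] mult_carrier_mat[of _ n n])
  then show ?thesis
    using QtQ Qc by (simp add: assoc_mult_mat[of _ n n _ n _ n] mult_carrier_mat[of _ n n]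
        left_mult_one_mat[of _ n n])
qed

lemma orthonormal_diag_conj_psd:
  assumes Q: "orthonormal_mat n Q" and f: "\<And>i. i < n \<Longrightarrow> f i \<ge> 0"
  shows "psd_mat (Q * mat_diag n f * Q\<^sup>T)"
proof -
  have Qc: "Q \<in> carrier_mat n n" using Q unfolding orthonormal_mat_def by auto
  have Qt: "Q\<^sup>T \<in> carrier_mat n n" and QtT: "Q\<^sup>T\<^sup>T = Q" using Qc by auto
  have diag_sym: "(mat_diag n f)\<^sup>T = mat_diag n f" by (rule eq_matI) (auto simp: mat_diag_def)
  have "(Q * mat_diag n f * Q\<^sup>T)\<^sup>T = Q * mat_diag n f * Q\<^sup>T"
    using sym_mat_conj[OF mat_diag_dim diag_sym Qt] unfolding QtT .
  moreover have "x \<bullet> ((Q * mat_diag n f * Q\<^sup>T) *\<^sub>v x) \<ge> 0" if x: "x \<in> carrier_vec n" for x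
  proof -
    have "x \<bullet> ((Q * mat_diag n f * Q\<^sup>T) *\<^sub>v x) = (Q\<^sup>T *\<^sub>v x) \<bullet> (mat_diag n f *\<^sub>v (Q\<^sup>T *\<^sub>v x))"
      using quad_form_conj[OF Qt mat_diag_dim x] unfolding QtT .
    also have "\<dots> = (\<Sum>i<n. f i * ((Q\<^sup>T *\<^sub>v x) $ i)\<^sup>2)"
      using quad_form_diagonal_mat[OF mat_diag_dim _ mult_mat_vec_carrier[OF Qt x], of f]
      by (simp add: mat_diag_def diagonal_mat_def)
    also have "\<dots> \<ge> 0" using f by (intro sum_nonneg) simp
    finally show ?thesis .
  qed
  ultimately show ?thesis
    using Qc unfolding psd_mat_def sym_mat_def by (simp add: mult_carrier_mat[of _ n n])
qed

lemma psd_mat_eigenvalue_nonneg: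
  fixes A :: "real mat" and v :: "real vec"
  assumes A: "psd_mat A" and v: "v \<in> carrier_vec (dim_row A)" "v \<bullet> v > 0"
    and eig: "A *\<^sub>v v = e \<cdot>\<^sub>v v"
  shows "e \<ge> 0"
proof -
  have "0 \<le> v \<bullet> (A *\<^sub>v v)" using A v(1) unfolding psd_mat_def by blast
  also have "\<dots> = e * (v \<bullet> v)" unfolding eig using v(1) by simp
  finally show ?thesis using v(2) by (simp add: zero_le_mult_iff)
qed

text \<open>\<open>T q - \<surd>l q\<close> is an eigenvector of \<open>T\<close> for \<open>-\<surd>l\<close>, which semidefiniteness excludes unless
  it vanishes or \<open>l = 0\<close>; in the latter case \<open>T q \<bullet> T q = q \<bullet> W q = 0\<close>.\<close>
lemma psd_sqrt_on_eigenvector: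
  fixes T :: "real mat"
  assumes T: "psd_mat T" "dim_row T = n" and TT: "T * T = W"
    and q: "q \<in> carrier_vec n" and eig: "W *\<^sub>v q = l \<cdot>\<^sub>v q" and l: "l \<ge> 0"
  shows "T *\<^sub>v q = sqrt l \<cdot>\<^sub>v q"
proof -
  have Tc: "T \<in> carrier_mat n n" and sym: "T\<^sup>T = T"
    and psd: "\<And>x. x \<in> carrier_vec n \<Longrightarrow> x \<bullet> (T *\<^sub>v x) \<ge> 0"
    using T unfolding psd_mat_def sym_mat_def by auto
  define s where "s = sqrt l"
  have "T *\<^sub>v (T *\<^sub>v q) = W *\<^sub>v q" unfolding TT[symmetric] using Tc q by simp
  then have TTq: "T *\<^sub>v (T *\<^sub>v q) = (s * s) \<cdot>\<^sub>v q" unfolding eig s_def using l by simp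
  have Tq: "T *\<^sub>v q \<in> carrier_vec n" using Tc q by simp
  define w where "w = T *\<^sub>v q - s \<cdot>\<^sub>v q"
  have w: "w \<in> carrier_vec n" unfolding w_def using Tq q by simp
  have "T *\<^sub>v w = T *\<^sub>v (T *\<^sub>v q) - T *\<^sub>v (s \<cdot>\<^sub>v q)"
    unfolding w_def using Tc Tq q by (simp add: mult_minus_distrib_mat_vec[of T n n])
  also have "\<dots> = T *\<^sub>v (T *\<^sub>v q) - s \<cdot>\<^sub>v (T *\<^sub>v q)" using mult_mat_vec[OF Tc q] by simp
  also have "\<dots> = (- s) \<cdot>\<^sub>v w"
    unfolding TTq w_def using carrier_vecD[OF Tq] carrier_vecD[OF q]
    by (intro eq_vecI) (auto simp: algebra_simps)
  finally have "0 \<le> - s * (w \<bullet> w)" using psd[OF w] w by simp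
  moreover have "s \<ge> 0" unfolding s_def using l by simp
  ultimately have "s = 0 \<or> w \<bullet> w = 0"
    using scalar_prod_self_nonneg[of w] by (auto simp: mult_le_0_iff)
  then show ?thesis
  proof
    assume "s = 0"
    then have "(T *\<^sub>v q) \<bullet> (T *\<^sub>v q) = 0"
      using sym_mat_scalar_prod_swap[OF Tc sym q Tq] TTq q by simp
    then show ?thesis using \<open>s = 0\<close> scalar_prod_self_eq_0_iff[OF Tq] q unfolding s_def by auto
  next
    assume "w \<bullet> w = 0"
    then have "w = 0\<^sub>v n" using scalar_prod_self_eq_0_iff[OF w] by simp
    show ?thesis unfolding s_def[symmetric]
    proof (rule eq_vecI)
      fix i assume "i < dim_vec (s \<cdot>\<^sub>v q)"
      then have "i < n" using q by simp
      then have "w $ i = 0" using \<open>w = 0\<^sub>v n\<close> by simp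
      with \<open>i < n\<close> show "(T *\<^sub>v q) $ i = (s \<cdot>\<^sub>v q) $ i" using Tq q unfolding w_def by simp
    qed (use Tc q in simp)
  qed
qed

theorem psd_mat_sqrt_ex1:
  fixes W :: "real mat"
  assumes W: "psd_mat W"
  shows "\<exists>!S. psd_mat S \<and> dim_row S = dim_row W \<and> S * S = W"
proof -
  define n where "n = dim_row W"
  have "W \<in> carrier_mat n n" "W\<^sup>T = W" using W unfolding psd_mat_def sym_mat_def n_def by auto
  then obtain Q f where Q: "orthonormal_mat n Q" and W_eq: "W = Q * mat_diag n f * Q\<^sup>T"
    using real_sym_mat_spectral by blast
  have Qc: "Q \<in> carrier_mat n n" and QQt: "Q * Q\<^sup>T = 1\<^sub>m n"
    using Q unfolding orthonormal_mat_def by auto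
  have eig: "W *\<^sub>v col Q i = f i \<cdot>\<^sub>v col Q i" if "i < n" for i
    unfolding W_eq by (rule orthonormal_diag_conj_eigenvector[OF Q that])
  have f_nonneg: "f i \<ge> 0" if "i < n" for i
  proof (rule psd_mat_eigenvalue_nonneg[OF W _ _ eig[OF that]])
    show "col Q i \<in> carrier_vec (dim_row W)" using Qc unfolding n_def[symmetric] carrier_vec_def by simp
    show "col Q i \<bullet> col Q i > 0" using orthonormal_mat_col_norm[OF Q that] by simp
  qed
  define S where "S = Q * mat_diag n (\<lambda>i. sqrt (f i)) * Q\<^sup>T"
  have "psd_mat S \<and> dim_row S = dim_row W \<and> S * S = W"
  proof (intro conjI)
    show "psd_mat S" unfolding S_def using f_nonneg by (intro orthonormal_diag_conj_psd[OF Q]) simp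
    show "dim_row S = dim_row W" unfolding S_def using Qc n_def by simp
    have "S * S = Q * mat_diag n (\<lambda>i. sqrt (f i) * sqrt (f i)) * Q\<^sup>T"
      unfolding S_def by (rule orthonormal_diag_conj_mult[OF Q])
    also have "mat_diag n (\<lambda>i. sqrt (f i) * sqrt (f i)) = mat_diag n f"
      unfolding mat_diag_def using f_nonneg by (intro eq_matI) simp_all
    finally show "S * S = W" unfolding W_eq .
  qed
  moreover have "T = S" if T: "psd_mat T" "dim_row T = dim_row W" "T * T = W" for T
  proof -
    have T_dim: "dim_row T = n" using T(2) unfolding n_def .
    then have Tc: "T \<in> carrier_mat n n" using T(1) unfolding psd_mat_def sym_mat_def by metis
    have "T * Q = Q * mat_diag n (\<lambda>i. sqrt (f i))"
    proof (rule mat_col_eqI)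
      fix i assume "i < dim_col (Q * mat_diag n (\<lambda>i. sqrt (f i)))"
      then have i: "i < n" by (simp add: mat_diag_def)
      have colQ: "col Q i \<in> carrier_vec n" using Qc unfolding carrier_vec_def by simp
      have "col (T * Q) i = T *\<^sub>v col Q i" by (rule col_mult2[OF Tc Qc i])
      also have "\<dots> = sqrt (f i) \<cdot>\<^sub>v col Q i"
        by (rule psd_sqrt_on_eigenvector[OF T(1) T_dim T(3) colQ eig[OF i] f_nonneg[OF i]])
      also have "\<dots> = col (Q * mat_diag n (\<lambda>i. sqrt (f i))) i"
        by (rule col_mult_mat_diag[OF Qc i, symmetric])
      finally show "col (T * Q) i = col (Q * mat_diag n (\<lambda>i. sqrt (f i))) i" .
    qed (use Tc Qc in \<open>simp_all add: mat_diag_def\<close>)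
    then have "T * (Q * Q\<^sup>T) = S"
      unfolding S_def using assoc_mult_mat[OF Tc Qc, of "Q\<^sup>T" n] Qc by simp
    then show ?thesis unfolding QQt using Tc by simp
  qed
  ultimately show ?thesis by blast
qed

lemma mat_sqrt:
  assumes "psd_mat W"
  shows "psd_mat (mat_sqrt W)" "dim_row (mat_sqrt W) = dim_row W" "mat_sqrt W * mat_sqrt W = W"
  using theI'[OF psd_mat_sqrt_ex1[OF assms]] unfolding mat_sqrt_def by auto

section \<open>Cauchy-Schwarz inequality and the spectral norm\<close>

lemma psd_form_cauchy_schwarz:
  fixes B :: "real mat"
  assumes B: "B \<in> carrier_mat n n" and sym: "B\<^sup>T = B"
    and psd: "\<And>z. z \<in> carrier_vec n \<Longrightarrow> z \<bullet> (B *\<^sub>v z) \<ge> 0"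
    and x: "x \<in> carrier_vec n" and y: "y \<in> carrier_vec n"
  shows "(x \<bullet> (B *\<^sub>v y))\<^sup>2 \<le> (x \<bullet> (B *\<^sub>v x)) * (y \<bullet> (B *\<^sub>v y))"
proof -
  define a where "a = x \<bullet> (B *\<^sub>v x)"
  define b where "b = x \<bullet> (B *\<^sub>v y)"
  define c where "c = y \<bullet> (B *\<^sub>v y)"
  have yx: "y \<bullet> (B *\<^sub>v x) = b"
    unfolding b_def using sym_mat_scalar_prod_swap[OF B sym y x] comm_scalar_prod[of "B *\<^sub>v y" n x] B x y
    by simp
  have quadratic: "a + 2 * t * b + t\<^sup>2 * c \<ge> 0" for t
  proof -
    have xt: "x + t \<cdot>\<^sub>v y \<in> carrier_vec n" using x y by simp
    have Bxy: "B *\<^sub>v x \<in> carrier_vec n" "B *\<^sub>v y \<in> carrier_vec n" using B x y by auto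
    have "B *\<^sub>v (x + t \<cdot>\<^sub>v y) = B *\<^sub>v x + t \<cdot>\<^sub>v (B *\<^sub>v y)"
      using B x y by (simp add: mult_add_distrib_mat_vec mult_mat_vec)
    then have "(x + t \<cdot>\<^sub>v y) \<bullet> (B *\<^sub>v (x + t \<cdot>\<^sub>v y)) = a + 2 * t * b + t\<^sup>2 * c"
      unfolding a_def c_def using x y Bxy yx
      by (simp add: add_scalar_prod_distrib[of _ n] scalar_prod_add_distrib[of _ n] algebra_simps
          power2_eq_square b_def[symmetric])
    then show ?thesis using psd[OF xt] by simp
  qed
  have "c \<ge> 0" unfolding c_def using psd[OF y] .
  have "b\<^sup>2 \<le> a * c"
  proof (cases "c = 0")
    case True
    have "b = 0"
    proof (rule ccontr)
      assume "b \<noteq> 0"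
      then show False using quadratic[of "- (a + 1) / (2 * b)"] True by (simp add: field_simps)
    qed
    then show ?thesis using True by simp
  next
    case False
    with \<open>c \<ge> 0\<close> have "c > 0" by simp
    then show ?thesis using quadratic[of "- b / c"] by (simp add: field_simps power2_eq_square)
  qed
  then show ?thesis unfolding a_def b_def c_def .
qed

lemma scalar_prod_cauchy_schwarz:
  fixes x y :: "real vec"
  assumes "x \<in> carrier_vec n" "y \<in> carrier_vec n"
  shows "(x \<bullet> y)\<^sup>2 \<le> (x \<bullet> x) * (y \<bullet> y)"
  using psd_form_cauchy_schwarz[of "1\<^sub>m n" n x y] assms scalar_prod_self_nonneg by simp

lemma scalar_prod_le_vnorm_mult:
  fixes x y :: "real vec"
  assumes x: "x \<in> carrier_vec n" and y: "y \<in> carrier_vec n"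
  shows "x \<bullet> y \<le> vnorm x * vnorm y"
proof -
  from scalar_prod_cauchy_schwarz[OF x y] have "\<bar>x \<bullet> y\<bar> \<le> sqrt ((x \<bullet> x) * (y \<bullet> y))" by (metis real_sqrt_abs real_sqrt_le_mono)
  then show ?thesis unfolding vnorm_def by (simp add: real_sqrt_mult)
qed

lemma bdd_above_spec_norm_set:
  fixes M :: "real mat"
  assumes M: "M \<in> carrier_mat n m"
  shows "bdd_above {vnorm (M *\<^sub>v v) | v. v \<in> carrier_vec (dim_col M) \<and> vnorm v = 1}"
proof -
  define F where "F = sqrt (\<Sum>i<n. row M i \<bullet> row M i)"
  have "vnorm (M *\<^sub>v v) \<le> F" if v: "v \<in> carrier_vec m" "vnorm v = 1" for v
  proof -
    have "(M *\<^sub>v v) \<bullet> (M *\<^sub>v v) = (\<Sum>i<n. (row M i \<bullet> v)\<^sup>2)"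
      using M v by (simp add: scalar_prod_def lessThan_atLeast0 power2_eq_square)
    also have "\<dots> \<le> (\<Sum>i<n. (row M i \<bullet> row M i) * (v \<bullet> v))"
      using M v by (intro sum_mono scalar_prod_cauchy_schwarz[of _ m]) auto
    also have "\<dots> = (\<Sum>i<n. row M i \<bullet> row M i)" using v vnorm_square[of v] by simp
    finally show ?thesis unfolding vnorm_def F_def by (rule real_sqrt_le_mono)
  qed
  then show ?thesis using M by (intro bdd_aboveI[of _ F]) auto
qed

lemma vnorm_mult_le_spec_norm:
  fixes M :: "real mat"
  assumes M: "M \<in> carrier_mat n m" and z: "z \<in> carrier_vec m"
  shows "vnorm (M *\<^sub>v z) \<le> spec_norm M * vnorm z"
proof (cases "z = 0\<^sub>v m")
  case True
  then have "M *\<^sub>v z = 0\<^sub>v n" using M by (intro eq_vecI) auto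
  then show ?thesis using True by (simp add: vnorm_def)
next
  case False
  then have z_pos: "vnorm z > 0"
    using scalar_prod_self_eq_0_iff[OF z] scalar_prod_self_nonneg[of z] unfolding vnorm_def by simp
  define v where "v = (1 / vnorm z) \<cdot>\<^sub>v z"
  have v: "v \<in> carrier_vec m" "vnorm v = 1" unfolding v_def using z z_pos by (auto simp: vnorm_smult)
  have "M *\<^sub>v z = vnorm z \<cdot>\<^sub>v (M *\<^sub>v v)"
    unfolding v_def using M z z_pos by (simp add: mult_mat_vec smult_smult_assoc)
  then have "vnorm (M *\<^sub>v z) = vnorm z * vnorm (M *\<^sub>v v)" using z_pos by (simp add: vnorm_smult)
  also have "vnorm (M *\<^sub>v v) \<le> spec_norm M"
    unfolding spec_norm_def using v M by (intro cSup_upper[OF _ bdd_above_spec_norm_set[OF M]]) auto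
  finally show ?thesis using z_pos by (simp add: mult.commute)
qed

lemma spec_norm_nonneg:
  fixes M :: "real mat"
  assumes M: "M \<in> carrier_mat n m" and m: "m > 0"
  shows "spec_norm M \<ge> 0"
proof -
  have "vnorm (unit_vec m 0) = 1" using m unfolding vnorm_def by simp
  then show ?thesis
    using vnorm_mult_le_spec_norm[OF M unit_vec_carrier[of m 0]] vnorm_nonneg[of "M *\<^sub>v unit_vec m 0"]
    by simp
qed

lemma spec_norm_le:
  fixes M :: "real mat"
  assumes M: "M \<in> carrier_mat n m" and m: "m > 0"
    and bound: "\<And>v. v \<in> carrier_vec m \<Longrightarrow> vnorm v = 1 \<Longrightarrow> vnorm (M *\<^sub>v v) \<le> c"
  shows "spec_norm M \<le> c"
proof -
  have u: "unit_vec m 0 \<in> carrier_vec m" "vnorm (unit_vec m 0) = 1" using m unfolding vnorm_def by auto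
  show ?thesis unfolding spec_norm_def
    by (rule cSup_least, use u M in blast, use bound M in auto)
qed

lemma spec_norm_no_cols:
  fixes M :: "real mat"
  assumes "dim_col M = 0"
  shows "spec_norm M = Sup {}"
proof -
  have "vnorm v = 0" if "v \<in> carrier_vec 0" for v :: "real vec"
    using that unfolding vnorm_def scalar_prod_def by simp
  then have "{vnorm (M *\<^sub>v v) | v. v \<in> carrier_vec (dim_col M) \<and> vnorm v = 1} = {}"
    using assms by fastforce
  then show ?thesis unfolding spec_norm_def by (rule arg_cong)
qed

lemma quad_form_le_spec_norm:
  fixes M :: "real mat"
  assumes M: "M \<in> carrier_mat n n" and z: "z \<in> carrier_vec n"
  shows "z \<bullet> (M *\<^sub>v z) \<le> spec_norm M * (z \<bullet> z)"
proof -
  have "z \<bullet> (M *\<^sub>v z) \<le> vnorm z * vnorm (M *\<^sub>v z)"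
    using M z by (intro scalar_prod_le_vnorm_mult[of _ n]) auto
  also have "\<dots> \<le> vnorm z * (spec_norm M * vnorm z)"
    by (rule mult_left_mono[OF vnorm_mult_le_spec_norm[OF M z] vnorm_nonneg])
  finally show ?thesis using vnorm_square[of z] by (simp add: power2_eq_square algebra_simps)
qed

lemma mult_unit_vec_eq_col:
  fixes A :: "real mat"
  assumes "A \<in> carrier_mat n m" "j < m"
  shows "A *\<^sub>v unit_vec m j = col A j"
proof -
  have "dim_row A = n" "dim_col A = m" using assms(1) by auto
  then show ?thesis using assms(2) by (intro eq_vecI) auto
qed

lemma pd_mat_diag_pos:
  assumes G: "pd_mat G" "G \<in> carrier_mat n n" and i: "i < n"
  shows "G $$ (i, i) > 0"
proof -
  have "dim_row G = n" using G(2) by simp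
  then have "unit_vec n i \<bullet> (G *\<^sub>v unit_vec n i) > 0" using G(1) i unfolding pd_mat_def by auto
  also have "G *\<^sub>v unit_vec n i = col G i" by (rule mult_unit_vec_eq_col[OF G(2) i])
  also have "unit_vec n i \<bullet> col G i = G $$ (i, i)" using G(2) i by simp
  finally show ?thesis .
qed

lemma mat_inv_of_injective:
  fixes A :: "real mat"
  assumes A: "A \<in> carrier_mat n n"
    and inj: "\<And>v. v \<in> carrier_vec n \<Longrightarrow> A *\<^sub>v v = 0\<^sub>v n \<Longrightarrow> v = 0\<^sub>v n"
  shows "mat_inv A \<in> carrier_mat n n" "A * mat_inv A = 1\<^sub>m n" "mat_inv A * A = 1\<^sub>m n"
proof -
  have "det A \<noteq> 0" using det_0_iff_vec_prod_zero[OF A] inj by auto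
  then have unit: "A \<in> Units (ring_mat TYPE(real) n ())" by (rule det_non_zero_imp_unit[OF A])
  obtain B where B: "B \<in> carrier_mat n n \<and> A * B = 1\<^sub>m n \<and> B * A = 1\<^sub>m n"
  proof (cases "mat_inverse A")
    case None
    then show ?thesis using mat_inverse(1)[OF A None, of "()"] unit by blast
  next
    case (Some B)
    then show ?thesis using mat_inverse(2)[OF A Some] that by blast
  qed
  have dA: "dim_row A = n" using A by simp
  have "mat_inv A \<in> carrier_mat n n \<and> A * mat_inv A = 1\<^sub>m n \<and> mat_inv A * A = 1\<^sub>m n"
    unfolding mat_inv_def dA by (rule someI[of _ B], use B in blast)
  then show "mat_inv A \<in> carrier_mat n n" "A * mat_inv A = 1\<^sub>m n" "mat_inv A * A = 1\<^sub>m n" by auto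
qed

lemma sym_mat_right_inverse_sym:
  fixes A B :: "real mat"
  assumes A: "A \<in> carrier_mat n n" and sym: "A\<^sup>T = A" and B: "B \<in> carrier_mat n n"
    and AB: "A * B = 1\<^sub>m n"
  shows "B\<^sup>T = B"
proof -
  have Bt: "B\<^sup>T \<in> carrier_mat n n" using B by simp
  have BtA: "B\<^sup>T * A = 1\<^sub>m n" using arg_cong[OF AB, of transpose_mat] transpose_mult[OF A B] sym by simp
  have "B\<^sup>T = B\<^sup>T * (A * B)" using AB Bt by simp
  also have "\<dots> = B" using assoc_mult_mat[OF Bt A B] BtA B by simp
  finally show ?thesis .
qed

lemma pd_mat_imp_psd_mat:
  assumes pd: "pd_mat D"
  shows "psd_mat D"
  unfolding psd_mat_def
proof (intro conjI ballI)
  show "sym_mat D" using pd unfolding pd_mat_def by simp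
  fix v :: "real vec" assume v: "v \<in> carrier_vec (dim_row D)"
  show "0 \<le> v \<bullet> (D *\<^sub>v v)"
  proof (cases "v = 0\<^sub>v (dim_row D)")
    case True
    have "D *\<^sub>v v \<in> carrier_vec (dim_row D)" unfolding carrier_vec_def by simp
    from scalar_prod_left_zero[OF this] True show ?thesis by simp
  next
    case False
    then show ?thesis using pd v unfolding pd_mat_def by (auto intro: less_imp_le)
  qed
qed

lemma pd_mat_inv:
  fixes D :: "real mat"
  assumes D: "D \<in> carrier_mat p p" and pd: "pd_mat D"
  shows "mat_inv D \<in> carrier_mat p p" "D * mat_inv D = 1\<^sub>m p" "mat_inv D * D = 1\<^sub>m p"
    "(mat_inv D)\<^sup>T = mat_inv D"
proof -
  have "v = 0\<^sub>v p" if v: "v \<in> carrier_vec p" and Dv: "D *\<^sub>v v = 0\<^sub>v p" for v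
  proof (rule ccontr)
    assume "v \<noteq> 0\<^sub>v p"
    then have "v \<bullet> (D *\<^sub>v v) > 0" using pd v D unfolding pd_mat_def by simp
    then show False unfolding Dv using v by simp
  qed
  note inv = mat_inv_of_injective[OF D this]
  then show "mat_inv D \<in> carrier_mat p p" "D * mat_inv D = 1\<^sub>m p" "mat_inv D * D = 1\<^sub>m p" by auto
  show "(mat_inv D)\<^sup>T = mat_inv D"
    using pd D unfolding pd_mat_def sym_mat_def by (intro sym_mat_right_inverse_sym[OF D _ inv(1,2)]) auto
qed

lemma pd_mat_inv_quad_form_nonneg:
  fixes D :: "real mat"
  assumes D: "D \<in> carrier_mat p p" "pd_mat D" and u: "u \<in> carrier_vec p"
  shows "u \<bullet> (mat_inv D *\<^sub>v u) \<ge> 0"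
proof -
  have I: "mat_inv D \<in> carrier_mat p p" and DI: "D * mat_inv D = 1\<^sub>m p"
    using pd_mat_inv[OF D] by auto
  define x where "x = mat_inv D *\<^sub>v u"
  have x: "x \<in> carrier_vec p" unfolding x_def using I u by simp
  have "D *\<^sub>v x = u" unfolding x_def using D I u DI by (simp flip: assoc_mult_mat_vec)
  then have "u \<bullet> (mat_inv D *\<^sub>v u) = x \<bullet> (D *\<^sub>v x)"
    unfolding x_def[symmetric] using comm_scalar_prod[OF u x] by simp
  also have "\<dots> \<ge> 0" using pd_mat_imp_psd_mat[OF D(2)] D(1) x unfolding psd_mat_def by auto
  finally show ?thesis .
qed

section \<open>Comparing quadratic forms through \<open>\<rho>\<close>\<close>

lemma quad_form_image_le_rho:
  fixes D W :: "real mat"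
  assumes D: "D \<in> carrier_mat p p" and W: "W \<in> carrier_mat p p" "psd_mat W"
    and u: "u \<in> carrier_vec p"
  shows "(W *\<^sub>v u) \<bullet> (D *\<^sub>v (W *\<^sub>v u))
    \<le> spec_norm (mat_sqrt W * D * mat_sqrt W) * (u \<bullet> (W *\<^sub>v u))"
proof -
  let ?S = "mat_sqrt W"
  note S_props = mat_sqrt[OF W(2)]
  have "dim_row ?S = p" using S_props(2) W(1) by simp
  then have S: "?S \<in> carrier_mat p p" "?S\<^sup>T = ?S"
    using S_props(1) unfolding psd_mat_def sym_mat_def by metis+
  define z where "z = ?S *\<^sub>v u"
  have z: "z \<in> carrier_vec p" unfolding z_def using S u by simp
  have "W *\<^sub>v u = (?S * ?S) *\<^sub>v u" unfolding S_props(3) ..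
  then have Wu: "W *\<^sub>v u = ?S *\<^sub>v z" unfolding z_def using S u by simp
  have "(W *\<^sub>v u) \<bullet> (D *\<^sub>v (W *\<^sub>v u)) = z \<bullet> (?S *\<^sub>v (D *\<^sub>v (?S *\<^sub>v z)))"
    unfolding Wu using sym_mat_scalar_prod_swap[OF S z, of "D *\<^sub>v (?S *\<^sub>v z)"] D S z by simp
  also have "\<dots> = z \<bullet> ((?S * D * ?S) *\<^sub>v z)"
    using S D z by (simp add: assoc_mult_mat_vec[of _ p p _ p])
  also have "\<dots> \<le> spec_norm (?S * D * ?S) * (z \<bullet> z)"
    using S D z by (intro quad_form_le_spec_norm) auto
  also have "z \<bullet> z = u \<bullet> (W *\<^sub>v u)"
    unfolding Wu z_def using sym_mat_scalar_prod_swap[OF S u, of "?S *\<^sub>v u"] S u by simp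
  finally show ?thesis .
qed

text \<open>With \<open>x = D\<^sup>-\<^sup>1 u\<close> and \<open>y = W u\<close> the two quadratic forms are \<open>x \<bullet> D y\<close> and \<open>x \<bullet> D x\<close>, so
  Cauchy-Schwarz for the inner product defined by \<open>D\<close> reduces the claim to the previous lemma.\<close>
lemma quad_form_le_rho:
  fixes D W :: "real mat"
  assumes D: "D \<in> carrier_mat p p" "pd_mat D" and W: "W \<in> carrier_mat p p" "psd_mat W"
    and p: "p > 0" and u: "u \<in> carrier_vec p"
  shows "u \<bullet> (W *\<^sub>v u) \<le> spec_norm (mat_sqrt W * D * mat_sqrt W) * (u \<bullet> (mat_inv D *\<^sub>v u))"
proof -
  let ?r = "spec_norm (mat_sqrt W * D * mat_sqrt W)"
  have I: "mat_inv D \<in> carrier_mat p p" and DI: "D * mat_inv D = 1\<^sub>m p"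
    using pd_mat_inv[OF D] by auto
  have D_sym: "D\<^sup>T = D" and D_psd: "\<And>v. v \<in> carrier_vec p \<Longrightarrow> v \<bullet> (D *\<^sub>v v) \<ge> 0"
    using pd_mat_imp_psd_mat[OF D(2)] D(1) unfolding psd_mat_def sym_mat_def by auto
  have "dim_row (mat_sqrt W) = p" using mat_sqrt(2)[OF W(2)] W(1) by simp
  then have "mat_sqrt W \<in> carrier_mat p p"
    using mat_sqrt(1)[OF W(2)] unfolding psd_mat_def sym_mat_def by metis
  then have r: "?r \<ge> 0" using D(1) p by (intro spec_norm_nonneg[of _ p p]) auto
  define x where "x = mat_inv D *\<^sub>v u"
  define y where "y = W *\<^sub>v u"
  define q where "q = u \<bullet> (W *\<^sub>v u)"
  define k where "k = u \<bullet> (mat_inv D *\<^sub>v u)"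
  have x: "x \<in> carrier_vec p" and y: "y \<in> carrier_vec p" unfolding x_def y_def using I W u by auto
  have Dx: "D *\<^sub>v x = u" unfolding x_def using D I u DI by (simp flip: assoc_mult_mat_vec)
  have xDy: "x \<bullet> (D *\<^sub>v y) = q"
    using sym_mat_scalar_prod_swap[OF D(1) D_sym x y] unfolding Dx q_def y_def .
  have xDx: "x \<bullet> (D *\<^sub>v x) = k"
    unfolding Dx k_def x_def[symmetric] using comm_scalar_prod[OF x u] .
  have k: "k \<ge> 0" unfolding k_def by (rule pd_mat_inv_quad_form_nonneg[OF D u])
  have q: "q \<ge> 0" unfolding q_def using W u unfolding psd_mat_def by auto
  have "q\<^sup>2 \<le> k * (y \<bullet> (D *\<^sub>v y))"
    using psd_form_cauchy_schwarz[OF D(1) D_sym D_psd x y] unfolding xDy xDx .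
  also have "\<dots> \<le> k * (?r * q)"
    unfolding y_def q_def using quad_form_image_le_rho[OF D(1) W u] k by (rule mult_left_mono)
  finally have "q * q \<le> (?r * k) * q" by (simp add: power2_eq_square algebra_simps)
  then have "q \<le> ?r * k" using q r k by (cases "q = 0") auto
  then show ?thesis unfolding q_def k_def .
qed

section \<open>Covariance of affine images of the noise\<close>

lemma integrable_mult_of_square_integrable:
  fixes X Y :: "'a \<Rightarrow> real"
  assumes "X \<in> borel_measurable M" "Y \<in> borel_measurable M"
    and "integrable M (\<lambda>w. (X w)\<^sup>2)" "integrable M (\<lambda>w. (Y w)\<^sup>2)"
  shows "integrable M (\<lambda>w. X w * Y w)"
proof (rule Bochner_Integration.integrable_bound[where f = "\<lambda>w. (X w)\<^sup>2 + (Y w)\<^sup>2"])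
  have "\<bar>a * b\<bar> \<le> a\<^sup>2 + b\<^sup>2" for a b :: real
  proof -
    have "2 * (\<bar>a\<bar> * \<bar>b\<bar>) \<le> a\<^sup>2 + b\<^sup>2"
      using sum_squares_bound[of "\<bar>a\<bar>" "\<bar>b\<bar>"] by (simp add: mult.assoc)
    moreover have "\<bar>a\<bar> * \<bar>b\<bar> \<ge> 0" by simp
    ultimately show ?thesis unfolding abs_mult by linarith
  qed
  then show "AE w in M. norm (X w * Y w) \<le> norm ((X w)\<^sup>2 + (Y w)\<^sup>2)"
    by (intro AE_I2) simp
qed (use assms in simp_all)

lemma (in prob_space) expectation_affine_comb:
  fixes \<epsilon> :: "'a \<Rightarrow> real vec"
  assumes int: "\<And>k. k < p \<Longrightarrow> integrable M (\<lambda>w. \<epsilon> w $ k)"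
    and mean: "\<And>k. k < p \<Longrightarrow> expectation (\<lambda>w. \<epsilon> w $ k) = 0"
  shows "expectation (\<lambda>w. c + (\<Sum>k<p. a k * \<epsilon> w $ k)) = c"
proof -
  have "expectation (\<lambda>w. c + (\<Sum>k<p. a k * \<epsilon> w $ k))
      = expectation (\<lambda>w. c) + expectation (\<lambda>w. \<Sum>k<p. a k * \<epsilon> w $ k)"
    using int by (intro Bochner_Integration.integral_add Bochner_Integration.integrable_sum) auto
  also have "expectation (\<lambda>w. \<Sum>k<p. a k * \<epsilon> w $ k) = (\<Sum>k<p. a k * expectation (\<lambda>w. \<epsilon> w $ k))"
    using int by (subst Bochner_Integration.integral_sum) auto
  finally show ?thesis using mean prob_space by simp
qed

lemma cov_mat_affine:
  fixes A :: "real mat" and c :: "real vec" and \<epsilon> Z :: "'a \<Rightarrow> real vec"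
  assumes A: "A \<in> carrier_mat d p" and c: "c \<in> carrier_vec d" and P: "prob_space M"
    and eps_vec: "\<And>w. w \<in> space M \<Longrightarrow> \<epsilon> w \<in> carrier_vec p"
    and meas: "\<And>i. i < p \<Longrightarrow> (\<lambda>w. \<epsilon> w $ i) \<in> borel_measurable M"
    and sq: "\<And>i. i < p \<Longrightarrow> integrable M (\<lambda>w. (\<epsilon> w $ i)\<^sup>2)"
    and mean: "\<And>i. i < p \<Longrightarrow> E M (\<lambda>w. \<epsilon> w $ i) = 0"
    and var: "cov_mat M \<epsilon> p = \<Delta>"
    and Z: "\<And>w. w \<in> space M \<Longrightarrow> Z w = c + A *\<^sub>v \<epsilon> w"
  shows "cov_mat M Z d = A * \<Delta> * A\<^sup>T"
proof -
  interpret prob_space M by (rule P)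
  have int1: "integrable M (\<lambda>w. \<epsilon> w $ k)" if "k < p" for k
    by (rule square_integrable_imp_integrable[OF meas[OF that] sq[OF that]])
  have int2: "integrable M (\<lambda>w. \<epsilon> w $ k * \<epsilon> w $ l)" if "k < p" "l < p" for k l
    using that by (intro integrable_mult_of_square_integrable meas sq)
  have \<Delta>: "\<Delta> \<in> carrier_mat p p" using var[symmetric] unfolding cov_mat_def by simp
  have \<Delta>_entry: "\<Delta> $$ (k, l) = E M (\<lambda>w. \<epsilon> w $ k * \<epsilon> w $ l)" if "k < p" "l < p" for k l
    using var[symmetric] that mean unfolding cov_mat_def by simp
  have Z_entry: "Z w $ i = c $ i + (\<Sum>k<p. A $$ (i, k) * \<epsilon> w $ k)" if "w \<in> space M" "i < d" for w i
    using Z[OF that(1)] eps_vec[OF that(1)] A c that(2) by (simp add: scalar_prod_def lessThan_atLeast0)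
  have Z_mean: "E M (\<lambda>w. Z w $ i) = c $ i" if i: "i < d" for i
  proof -
    have "E M (\<lambda>w. Z w $ i) = E M (\<lambda>w. c $ i + (\<Sum>k<p. A $$ (i, k) * \<epsilon> w $ k))"
      using Z_entry i by (intro Bochner_Integration.integral_cong) auto
    then show ?thesis using expectation_affine_comb[OF int1 mean] by simp
  qed
  show ?thesis
  proof (rule eq_matI)
    fix i j assume "i < dim_row (A * \<Delta> * A\<^sup>T)" "j < dim_col (A * \<Delta> * A\<^sup>T)"
    then have i: "i < d" and j: "j < d" using A by auto
    have "cov_mat M Z d $$ (i, j) = E M (\<lambda>w. (Z w $ i - c $ i) * (Z w $ j - c $ j))"
      unfolding cov_mat_def using i j Z_mean by simp
    also have "\<dots> = E M (\<lambda>w. \<Sum>k<p. \<Sum>l<p. (A $$ (i, k) * A $$ (j, l)) * (\<epsilon> w $ k * \<epsilon> w $ l))"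
      using Z_entry i j by (intro Bochner_Integration.integral_cong) (auto simp: sum_product algebra_simps)
    also have "\<dots> = (\<Sum>k<p. \<Sum>l<p. (A $$ (i, k) * A $$ (j, l)) * E M (\<lambda>w. \<epsilon> w $ k * \<epsilon> w $ l))"
      using int2 by (subst Bochner_Integration.integral_sum,
          auto intro!: sum.cong Bochner_Integration.integrable_sum simp: Bochner_Integration.integral_sum)
    also have "\<dots> = (\<Sum>k<p. A $$ (i, k) * (\<Sum>l<p. \<Delta> $$ (k, l) * A $$ (j, l)))"
      using \<Delta>_entry by (simp add: sum_distrib_left algebra_simps)
    also have "\<dots> = (A * \<Delta> * A\<^sup>T) $$ (i, j)"
      using A \<Delta> i j by (simp add: scalar_prod_def lessThan_atLeast0)
    finally show "cov_mat M Z d $$ (i, j) = (A * \<Delta> * A\<^sup>T) $$ (i, j)" .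
  qed (use A in \<open>auto simp: cov_mat_def\<close>)
qed

section \<open>Stability of the reduction\<close>

definition reduction_mat :: "real mat \<Rightarrow> real mat \<Rightarrow> real mat" where
  "reduction_mat \<Gamma> \<Delta> = mat_inv (\<Gamma>\<^sup>T * mat_inv \<Delta> * \<Gamma>) * \<Gamma>\<^sup>T * mat_inv \<Delta>"

lemma reduction_of_model:
  fixes \<Gamma> \<Delta> :: "real mat"
  assumes R: "reduction_mat \<Gamma> \<Delta> \<in> carrier_mat d p" and \<Gamma>: "\<Gamma> \<in> carrier_mat p d"
    and \<mu>: "\<mu> \<in> carrier_vec p" and \<xi>: "\<xi> \<in> carrier_vec d" and e: "e \<in> carrier_vec p"
  shows "reduction \<Gamma> \<Delta> \<mu> (\<mu> + \<Gamma> *\<^sub>v \<xi> + e)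
    = reduction_mat \<Gamma> \<Delta> *\<^sub>v (\<Gamma> *\<^sub>v \<xi>) + reduction_mat \<Gamma> \<Delta> *\<^sub>v e"
proof -
  have \<Gamma>\<xi>: "\<Gamma> *\<^sub>v \<xi> \<in> carrier_vec p" using \<Gamma> \<xi> by simp
  have "\<mu> + \<Gamma> *\<^sub>v \<xi> + e - \<mu> = \<Gamma> *\<^sub>v \<xi> + e" using \<mu> \<Gamma>\<xi> e by (intro eq_vecI) auto
  then show ?thesis
    unfolding reduction_def reduction_mat_def[symmetric] using mult_add_distrib_mat_vec[OF R \<Gamma>\<xi> e] by simp
qed

lemma reduction_mat_cov:
  fixes G D :: "real mat"
  defines "K \<equiv> G\<^sup>T * mat_inv D * G"
  assumes G: "G \<in> carrier_mat p d" and D: "D \<in> carrier_mat p p" "pd_mat D"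
    and V: "mat_inv K \<in> carrier_mat d d" and KV: "K * mat_inv K = 1\<^sub>m d"
  shows "reduction_mat G D \<in> carrier_mat d p"
    and "reduction_mat G D * D * (reduction_mat G D)\<^sup>T = mat_inv K"
proof -
  let ?I = "mat_inv D" and ?V = "mat_inv K"
  have I: "?I \<in> carrier_mat p p" and ID: "?I * D = 1\<^sub>m p" and I_sym: "?I\<^sup>T = ?I"
    using pd_mat_inv[OF D] by auto
  have Gt: "G\<^sup>T \<in> carrier_mat d p" using G by simp
  have K: "K \<in> carrier_mat d d" unfolding K_def using G I by simp
  have "K\<^sup>T = K" unfolding K_def using sym_mat_conj[OF I I_sym G] by simp
  then have V_sym: "?V\<^sup>T = ?V" by (rule sym_mat_right_inverse_sym[OF K _ V KV])
  have VK: "?V * K = 1\<^sub>m d" using mat_mult_left_right_inverse[OF K V KV] .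
  have R: "reduction_mat G D = ?V * (G\<^sup>T * ?I)"
    unfolding reduction_mat_def K_def[symmetric] using assoc_mult_mat[OF V Gt I] .
  then show "reduction_mat G D \<in> carrier_mat d p" using V Gt I by simp
  have "(G\<^sup>T * ?I) * D * (G\<^sup>T * ?I)\<^sup>T = G\<^sup>T * (?I * D * ?I) * G"
    using mult_conj_assoc[OF Gt I D(1)] I_sym by simp
  also have "?I * D * ?I = ?I" using ID I by simp
  finally have "(G\<^sup>T * ?I) * D * (G\<^sup>T * ?I)\<^sup>T = K" unfolding K_def .
  then have "reduction_mat G D * D * (reduction_mat G D)\<^sup>T = ?V * K * ?V"
    unfolding R using mult_conj_assoc[OF V mult_carrier_mat[OF Gt I] D(1)] V_sym by simp
  then show "reduction_mat G D * D * (reduction_mat G D)\<^sup>T = ?V" unfolding VK using V by simp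
qed

lemma coercive_mat_inv:
  fixes K :: "real mat"
  assumes K: "K \<in> carrier_mat d d" and c: "c > 0"
    and coercive: "\<And>a. a \<in> carrier_vec d \<Longrightarrow> c * (a \<bullet> a) \<le> a \<bullet> (K *\<^sub>v a)"
  shows "mat_inv K \<in> carrier_mat d d" "K * mat_inv K = 1\<^sub>m d"
proof -
  have "a = 0\<^sub>v d" if a: "a \<in> carrier_vec d" and Ka: "K *\<^sub>v a = 0\<^sub>v d" for a
  proof -
    have "c * (a \<bullet> a) \<le> 0" using coercive[OF a] Ka a by simp
    then have "a \<bullet> a = 0" using c scalar_prod_self_nonneg[of a] by (simp add: mult_le_0_iff)
    then show ?thesis using scalar_prod_self_eq_0_iff[OF a] by simp
  qed
  then show "mat_inv K \<in> carrier_mat d d" "K * mat_inv K = 1\<^sub>m d"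
    using mat_inv_of_injective[OF K] by auto
qed

lemma spec_norm_inverse_le:
  fixes K V :: "real mat"
  assumes K: "K \<in> carrier_mat d d" and V: "V \<in> carrier_mat d d" and KV: "K * V = 1\<^sub>m d"
    and d: "d > 0" and c: "c > 0"
    and coercive: "\<And>a. a \<in> carrier_vec d \<Longrightarrow> c * (a \<bullet> a) \<le> a \<bullet> (K *\<^sub>v a)"
  shows "spec_norm V \<le> 1 / c"
proof (rule spec_norm_le[OF V d])
  fix b assume b: "b \<in> carrier_vec d" "vnorm b = 1"
  define a where "a = V *\<^sub>v b"
  have a: "a \<in> carrier_vec d" unfolding a_def using V b by simp
  have "K *\<^sub>v a = b" unfolding a_def using K V b(1) by (simp flip: assoc_mult_mat_vec add: KV)
  then have "c * (vnorm a)\<^sup>2 \<le> a \<bullet> b" using coercive[OF a] unfolding vnorm_square by simp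
  also have "\<dots> \<le> vnorm a" using scalar_prod_le_vnorm_mult[OF a b(1)] b(2) by simp
  finally have "c * vnorm a * vnorm a \<le> 1 * vnorm a" by (simp add: power2_eq_square)
  then have "c * vnorm a \<le> 1" using vnorm_nonneg[of a] by (cases "vnorm a = 0") auto
  then show "vnorm (V *\<^sub>v b) \<le> 1 / c" unfolding a_def[symmetric] using c by (simp add: field_simps)
qed

lemma precision_mat_coercive:
  fixes G D W :: "real mat"
  assumes G: "G \<in> carrier_mat p d" and D: "D \<in> carrier_mat p p" "pd_mat D"
    and W: "W \<in> carrier_mat p p" "psd_mat W" and p: "p > 0"
    and diag: "diagonal_mat (G\<^sup>T * W * G)" and hh: "hh > 0" and C: "C > 0"
    and diag_ge: "\<And>i. i < d \<Longrightarrow> g * hh \<le> (G\<^sup>T * W * G) $$ (i, i)"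
    and rho: "spec_norm (mat_sqrt W * D * mat_sqrt W) \<le> C * hh"
    and a: "a \<in> carrier_vec d"
  shows "g / C * (a \<bullet> a) \<le> a \<bullet> ((G\<^sup>T * mat_inv D * G) *\<^sub>v a)"
proof -
  let ?K = "G\<^sup>T * mat_inv D * G"
  have I: "mat_inv D \<in> carrier_mat p p" using pd_mat_inv[OF D] by simp
  have Ga: "G *\<^sub>v a \<in> carrier_vec p" using G a by simp
  have K_nonneg: "a \<bullet> (?K *\<^sub>v a) \<ge> 0"
    unfolding quad_form_conj[OF G I a] by (rule pd_mat_inv_quad_form_nonneg[OF D Ga])
  have "g * hh * (a \<bullet> a) = (\<Sum>i<d. g * hh * (a $ i)\<^sup>2)"
    using a by (simp add: scalar_prod_def lessThan_atLeast0 power2_eq_square sum_distrib_left)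
  also have "\<dots> \<le> (\<Sum>i<d. (G\<^sup>T * W * G) $$ (i, i) * (a $ i)\<^sup>2)"
    by (intro sum_mono mult_right_mono diag_ge) auto
  also have "\<dots> = a \<bullet> ((G\<^sup>T * W * G) *\<^sub>v a)"
    using quad_form_diagonal_mat[OF _ diag a] G W by simp
  also have "\<dots> \<le> spec_norm (mat_sqrt W * D * mat_sqrt W) * (a \<bullet> (?K *\<^sub>v a))"
    unfolding quad_form_conj[OF G W(1) a] quad_form_conj[OF G I a] by (rule quad_form_le_rho[OF D W p Ga])
  also have "\<dots> \<le> (C * hh) * (a \<bullet> (?K *\<^sub>v a))"
    by (rule mult_right_mono[OF rho K_nonneg])
  finally have "hh * (g * (a \<bullet> a)) \<le> hh * (C * (a \<bullet> (?K *\<^sub>v a)))" by (simp add: algebra_simps)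
  then have "g * (a \<bullet> a) \<le> C * (a \<bullet> (?K *\<^sub>v a))" using hh by simp
  then show ?thesis using C by (simp add: field_simps)
qed

lemma spec_norm_cov_reduction_le:
  fixes \<Gamma> \<Delta> W :: "real mat" and \<epsilon> :: "'a \<Rightarrow> real vec"
  assumes \<Gamma>: "\<Gamma> \<in> carrier_mat p d" and \<Delta>: "\<Delta> \<in> carrier_mat p p" "pd_mat \<Delta>"
    and W: "W \<in> carrier_mat p p" "psd_mat W" and \<mu>: "\<mu> \<in> carrier_vec p" and \<xi>: "\<xi> \<in> carrier_vec d"
    and p: "p > 0" and d: "d > 0" and diag: "diagonal_mat (\<Gamma>\<^sup>T * W * \<Gamma>)"
    and P: "prob_space M"
    and eps_vec: "\<And>w. w \<in> space M \<Longrightarrow> \<epsilon> w \<in> carrier_vec p"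
    and eps_meas: "\<And>i. i < p \<Longrightarrow> (\<lambda>w. \<epsilon> w $ i) \<in> borel_measurable M"
    and eps_sq_int: "\<And>i. i < p \<Longrightarrow> integrable M (\<lambda>w. (\<epsilon> w $ i)\<^sup>2)"
    and eps_mean: "\<And>i. i < p \<Longrightarrow> E M (\<lambda>w. \<epsilon> w $ i) = 0"
    and eps_var: "cov_mat M \<epsilon> p = \<Delta>"
    and g: "g > 0" and hh: "hh > 0" and C: "C > 0"
    and diag_ge: "\<And>i. i < d \<Longrightarrow> g * hh \<le> (\<Gamma>\<^sup>T * W * \<Gamma>) $$ (i, i)"
    and rho: "spec_norm (mat_sqrt W * \<Delta> * mat_sqrt W) \<le> C * hh"
  shows "spec_norm (cov_mat M (\<lambda>w. reduction \<Gamma> \<Delta> \<mu> (\<mu> + \<Gamma> *\<^sub>v \<xi> + \<epsilon> w)) d) \<le> C / g"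
proof -
  define K where "K = \<Gamma>\<^sup>T * mat_inv \<Delta> * \<Gamma>"
  define R where "R = reduction_mat \<Gamma> \<Delta>"
  have K: "K \<in> carrier_mat d d" unfolding K_def using \<Gamma> pd_mat_inv[OF \<Delta>] by simp
  have coercive: "g / C * (a \<bullet> a) \<le> a \<bullet> (K *\<^sub>v a)" if "a \<in> carrier_vec d" for a
    unfolding K_def by (rule precision_mat_coercive[OF \<Gamma> \<Delta> W p diag hh C diag_ge rho that])
  have gC: "g / C > 0" using g C by simp
  note V = coercive_mat_inv[OF K gC coercive]
  note R_props = reduction_mat_cov[OF \<Gamma> \<Delta> V[unfolded K_def], folded K_def R_def]
  have "cov_mat M (\<lambda>w. reduction \<Gamma> \<Delta> \<mu> (\<mu> + \<Gamma> *\<^sub>v \<xi> + \<epsilon> w)) d = R * \<Delta> * R\<^sup>T"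
  proof (rule cov_mat_affine[OF R_props(1) _ P eps_vec eps_meas eps_sq_int eps_mean eps_var])
    show "R *\<^sub>v (\<Gamma> *\<^sub>v \<xi>) \<in> carrier_vec d" using R_props(1) \<Gamma> \<xi> by simp
    show "reduction \<Gamma> \<Delta> \<mu> (\<mu> + \<Gamma> *\<^sub>v \<xi> + \<epsilon> w) = R *\<^sub>v (\<Gamma> *\<^sub>v \<xi>) + R *\<^sub>v \<epsilon> w"
      if "w \<in> space M" for w
      unfolding R_def by (rule reduction_of_model[OF R_props(1)[unfolded R_def] \<Gamma> \<mu> \<xi> eps_vec[OF that]])
  qed
  also have "\<dots> = mat_inv K" by (rule R_props(2))
  also have "spec_norm (mat_inv K) \<le> 1 / (g / C)" by (rule spec_norm_inverse_le[OF K V d gC coercive])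
  finally show ?thesis by simp
qed

lemma eventually_uniform_lower_bound:
  fixes f :: "'i \<Rightarrow> 'a \<Rightarrow> real"
  assumes "finite I" and lim: "\<And>i. i \<in> I \<Longrightarrow> (f i \<longlongrightarrow> c i) F" and pos: "\<And>i. i \<in> I \<Longrightarrow> c i > 0"
  shows "\<exists>g > 0. \<forall>\<^sub>F x in F. \<forall>i \<in> I. g \<le> f i x"
proof -
  define g where "g = Min (insert 1 (c ` I)) / 2"
  have "g > 0" unfolding g_def using \<open>finite I\<close> pos by simp
  have "g < c i" if "i \<in> I" for i
  proof -
    have "Min (insert 1 (c ` I)) \<le> c i" using \<open>finite I\<close> that by simp
    then show ?thesis using pos[OF that] unfolding g_def by simp
  qed
  then have "\<forall>\<^sub>F x in F. \<forall>i \<in> I. g < f i x"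
    using \<open>finite I\<close> lim by (intro eventually_ball_finite ballI order_tendstoD(1)) auto
  then show ?thesis using \<open>g > 0\<close> by (auto elim!: eventually_mono intro!: exI[of _ g])
qed

lemma eventually_signal_noise_bounds:
  fixes S :: "nat \<Rightarrow> real mat" and r h :: "nat \<Rightarrow> real"
  assumes G: "pd_mat G" "G \<in> carrier_mat d d"
    and lim: "\<And>i j. i < d \<Longrightarrow> j < d \<Longrightarrow> (\<lambda>p. S p $$ (i, j) / h p) \<longlonglongrightarrow> G $$ (i, j)"
    and h: "\<And>p. h p > 0" and r: "r \<in> O(h)"
  obtains g C where "g > 0" "C > 0"
    "\<forall>\<^sub>F p in sequentially. (\<forall>i < d. g * h p \<le> S p $$ (i, i)) \<and> r p \<le> C * h p"
proof -
  have "\<exists>g > 0. \<forall>\<^sub>F p in sequentially. \<forall>i \<in> {..<d}. g \<le> S p $$ (i, i) / h p"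
    by (rule eventually_uniform_lower_bound) (use lim pd_mat_diag_pos[OF G] in auto)
  then obtain g where g: "g > 0"
    and diag: "\<forall>\<^sub>F p in sequentially. \<forall>i \<in> {..<d}. g \<le> S p $$ (i, i) / h p" by blast
  obtain C where C: "C > 0" and bound: "\<forall>\<^sub>F p in sequentially. norm (r p) \<le> C * norm (h p)"
    using landau_o.bigE[OF r] by blast
  have "\<forall>\<^sub>F p in sequentially. (\<forall>i < d. g * h p \<le> S p $$ (i, i)) \<and> r p \<le> C * h p"
    using diag bound
  proof eventually_elim
    case (elim p)
    then show ?case using h[of p] by (auto simp: field_simps)
  qed
  with g C that show ?thesis by blast
qed

theorem lemma1:
  fixes d :: nat
    and \<mu> :: "nat \<Rightarrow> real vec" and \<Gamma> \<Delta> W :: "nat \<Rightarrow> real mat"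
    and \<xi> :: "real vec"
    and M :: "'a measure" and \<epsilon> :: "nat \<Rightarrow> 'a \<Rightarrow> real vec"
    and h :: "nat \<Rightarrow> real" and G :: "real mat"
  assumes dims: "\<And>p. \<mu> p \<in> carrier_vec p" "\<And>p. \<Gamma> p \<in> carrier_mat p d"
      "\<And>p. \<Delta> p \<in> carrier_mat p p" "\<And>p. W p \<in> carrier_mat p p"
      "\<xi> \<in> carrier_vec d"
    and Delta_pd: "\<And>p. pd_mat (\<Delta> p)"
    and W_psd: "\<And>p. psd_mat (W p)"
    and Gamma_norm: "\<And>p. diagonal_mat ((\<Gamma> p)\<^sup>T * W p * \<Gamma> p)"
    and M_prob: "prob_space M"
    and eps_vec: "\<And>p w. w \<in> space M \<Longrightarrow> \<epsilon> p w \<in> carrier_vec p"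
    and eps_meas: "\<And>p i. i < p \<Longrightarrow> (\<lambda>w. \<epsilon> p w $ i) \<in> borel_measurable M"
    and eps_sq_int: "\<And>p i. i < p \<Longrightarrow> integrable M (\<lambda>w. (\<epsilon> p w $ i)\<^sup>2)"
    and eps_mean: "\<And>p i. i < p \<Longrightarrow> E M (\<lambda>w. \<epsilon> p w $ i) = 0"
    and eps_var: "\<And>p. cov_mat M (\<epsilon> p) p = \<Delta> p"
    and h_pos: "\<And>p. h p > 0"
    and h_mono: "mono h"
    and h_O: "h \<in> O(\<lambda>p. real p)"
    and G_props: "G \<in> carrier_mat d d" "diagonal_mat G" "pd_mat G"
    and G_lim: "\<And>i j. i < d \<Longrightarrow> j < d \<Longrightarrow>
        (\<lambda>p. (((\<Gamma> p)\<^sup>T * W p * \<Gamma> p) $$ (i,j)) / h p) \<longlonglongrightarrow> G $$ (i,j)"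
    and rho_O: "(\<lambda>p. spec_norm (mat_sqrt (W p) * \<Delta> p * mat_sqrt (W p))) \<in> O(h)"
  shows "\<exists>B. \<forall>\<^sub>F p in sequentially.
    spec_norm (cov_mat M (\<lambda>w. reduction (\<Gamma> p) (\<Delta> p) (\<mu> p)
                                 (\<mu> p + \<Gamma> p *\<^sub>v \<xi> + \<epsilon> p w)) d) \<le> B"
proof (cases "d = 0")
  case True
  have "spec_norm (cov_mat M (\<lambda>w. reduction (\<Gamma> p) (\<Delta> p) (\<mu> p)
      (\<mu> p + \<Gamma> p *\<^sub>v \<xi> + \<epsilon> p w)) d) = Sup {}" for p
    by (rule spec_norm_no_cols) (simp add: cov_mat_def True)
  then show ?thesis by (intro exI[of _ "Sup {}"]) simp
next
  case False
  obtain g C where g: "g > 0" and C: "C > 0" and bounds: "\<forall>\<^sub>F p in sequentially.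
      (\<forall>i < d. g * h p \<le> ((\<Gamma> p)\<^sup>T * W p * \<Gamma> p) $$ (i, i))
      \<and> spec_norm (mat_sqrt (W p) * \<Delta> p * mat_sqrt (W p)) \<le> C * h p"
    by (rule eventually_signal_noise_bounds[OF G_props(3,1) G_lim h_pos rho_O])
  have "\<forall>\<^sub>F p in sequentially. spec_norm (cov_mat M (\<lambda>w. reduction (\<Gamma> p) (\<Delta> p) (\<mu> p)
      (\<mu> p + \<Gamma> p *\<^sub>v \<xi> + \<epsilon> p w)) d) \<le> C / g"
    using bounds eventually_gt_at_top[of 0]
  proof eventually_elim
    case (elim p)
    show ?case
      by (rule spec_norm_cov_reduction_le[OF dims(2,3) Delta_pd dims(4) W_psd dims(1,5) elim(2) _
            Gamma_norm M_prob eps_vec eps_meas eps_sq_int eps_mean eps_var g h_pos C])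
        (use False elim(1) in auto)
  qed
  then show ?thesis by blast
qed

end
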